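(* Let $X$ be a compact complex manifold of dimension $n$ with Kähler form $\omega$, $D\subset\mathbb{C}^m$ open with coordinates $z_1,\dots,z_m$, and let $u$ be a $C^2$ real function on $D\times X$ with $\omega+i\partial\bar\partial u(z,\cdot)>0$ on $X$ for all $z\in D$. Let $x=(x_1,\dots,x_n)$ be local holomorphic coordinates on an open set $W\subset X$ on which $\psi$ is a local potential of $\omega$. Then for every holomorphic map $f$ from an open subset of $D$ into $W$, $$\Delta\big(\psi(f(z))+u(z,f(z))\big)\ \ge\ \sum_{j=1}^m\frac{\det(u+\psi)_j}{\det(\psi_{\mu\bar\lambda}+u_{\mu\bar\lambda})}\Big|_{(z,f(z))}.$$ Moreover, for every $(z_0,x_0)\in D\times W$ there is such an $f$, defined near $z_0$, with $f(z_0)=x_0$ and $$\Delta\big(\psi(f(z))+u(z,f(z))\big)\big|_{z_0}=\sum_{j=1}^m\frac{\det(u+\psi)_j}{\det(\psi_{\mu\bar\lambda}+u_{\mu\bar\lambda})}\Big|_{(z_0,x_0)}.$$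
   Context: $\Delta=\sum_{i=1}^m\partial^2/\partial z_i\partial\bar z_i$. A local potential of $\omega$ on $W$ is a smooth real $\psi$ with $i\partial\bar\partial\psi=\omega$ on $W$. Here $u_{\mu\bar\lambda}=\partial^2u/\partial x_\mu\partial\bar x_\lambda$, $\psi_{\mu\bar\lambda}=\partial^2\psi/\partial x_\mu\partial\bar x_\lambda$, and $(u+\psi)_j$ denotes the $(n+1)\times(n+1)$ complex Hessian of $u+\psi$ in the variables $(z_j,x_1,\dots,x_n)$, i.e. the matrix with first row $((u+\psi)_{z_j\bar z_j},(u+\psi)_{z_j\bar x_1},\dots,(u+\psi)_{z_j\bar x_n})$ and row $\mu+1$ equal to $((u+\psi)_{x_\mu\bar z_j},(u+\psi)_{x_\mu\bar x_1},\dots,(u+\psi)_{x_\mu\bar x_n})$. *)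

theory Defs
  imports "HOL-Analysis.Analysis"
begin

primrec Ck :: "nat \<Rightarrow> 'a::real_normed_vector set \<Rightarrow> ('a \<Rightarrow> real) \<Rightarrow> bool" where
  "Ck 0 S g = continuous_on S g"
| "Ck (Suc k) S g = ((\<forall>p\<in>S. g differentiable (at p)) \<and>
      (\<forall>v. Ck k S (\<lambda>q. frechet_derivative g (at q) v)))"

definition smooth_on :: "'a::real_normed_vector set \<Rightarrow> ('a \<Rightarrow> real) \<Rightarrow> bool" where
  "smooth_on S g = (\<forall>k. Ck k S g)"

definition d2 :: "('a::real_normed_vector \<Rightarrow> real) \<Rightarrow> 'a \<Rightarrow> 'a \<Rightarrow> 'a \<Rightarrow> real" where
  "d2 g p v w = frechet_derivative (\<lambda>q. frechet_derivative g (at q) v) (at p) w"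

text \<open>Mixed Wirtinger derivative d^2 g / (d a  d conj b) at p, where the complex coordinate
  a has real directions ea (real part) and ia (imaginary part), similarly for b:
  (1/4)(g_{x_a x_b} + g_{y_a y_b} + i (g_{x_a y_b} - g_{y_a x_b})).\<close>
definition wirt :: "('a::real_normed_vector \<Rightarrow> real) \<Rightarrow> 'a \<Rightarrow> 'a \<Rightarrow> 'a \<Rightarrow> 'a \<Rightarrow> 'a \<Rightarrow> complex" where
  "wirt g p ea ia eb ib =
     complex_of_real ((d2 g p ea eb + d2 g p ia ib) / 4)
     + \<i> * complex_of_real ((d2 g p ea ib - d2 g p ia eb) / 4)"

definition cLap :: "(complex^'m \<Rightarrow> real) \<Rightarrow> complex^'m \<Rightarrow> complex" where
  "cLap h z = (\<Sum>j\<in>UNIV. wirt h z (axis j 1) (axis j \<i>) (axis j 1) (axis j \<i>))"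

definition holo_on :: "(complex^'m) set \<Rightarrow> (complex^'m \<Rightarrow> complex^'n) \<Rightarrow> bool" where
  "holo_on U f = (\<forall>p\<in>U. \<exists>L. (f has_derivative L) (at p) \<and> (\<forall>c v. L (c *s v) = c *s L v))"

definition hessX :: "((complex^'m::finite) \<times> (complex^'n::finite) \<Rightarrow> real) \<Rightarrow> (complex^'m::finite) \<times> (complex^'n::finite)
    \<Rightarrow> complex^'n^'n" where
  "hessX F p = (\<chi> mu lam. wirt F p (0, axis mu 1) (0, axis mu \<i>) (0, axis lam 1) (0, axis lam \<i>))"

text \<open>Real directions of the coordinates (z_j, x_1, ..., x_n): index None is z_j,
  index Some mu is x_mu.\<close>
definition dirR :: "'m \<Rightarrow> 'n option \<Rightarrow> (complex^'m::finite) \<times> (complex^'n::finite)" where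
  "dirR j a = (case a of None \<Rightarrow> (axis j 1, 0) | Some mu \<Rightarrow> (0, axis mu 1))"

definition dirI :: "'m \<Rightarrow> 'n option \<Rightarrow> (complex^'m::finite) \<times> (complex^'n::finite)" where
  "dirI j a = (case a of None \<Rightarrow> (axis j \<i>, 0) | Some mu \<Rightarrow> (0, axis mu \<i>))"

definition hessJ :: "((complex^'m::finite) \<times> (complex^'n::finite) \<Rightarrow> real) \<Rightarrow> (complex^'m::finite) \<times> (complex^'n::finite)
    \<Rightarrow> 'm \<Rightarrow> complex^('n::finite option)^('n option)" where
  "hessJ F p j = (\<chi> a b. wirt F p (dirR j a) (dirI j a) (dirR j b) (dirI j b))"

definition pos_herm :: "complex^'n^'n \<Rightarrow> bool" where
  "pos_herm H = (\<forall>\<xi>::complex^'n. \<xi> \<noteq> 0 \<longrightarrow>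
      0 < Re (\<Sum>mu\<in>UNIV. \<Sum>lam\<in>UNIV. H $ mu $ lam * \<xi> $ mu * cnj (\<xi> $ lam)))"

end

theory Submission
  imports Defs "HOL-Complex_Analysis.Cauchy_Integral_Formula"
begin

text \<open>Write F(z, x) = u(z, x) + psi(x). For holomorphic f the chain rule gives
  d_j dbar_j F(z, f z) = xi^* H_j xi with xi = (1, d_j f) and H_j = (u + psi)_j; the terms
  with second derivatives of f drop out because d_j dbar_j f = 0. The lower block of H_j,
  the fibre Hessian, is positive definite, so over all xi = (1, c) this Hermitian form is
  minimised at the solution of a linear system, where it equals the Schur complement
  det H_j / det (psi + u)_{mu lambda-bar}. Summing over j gives the inequality, and the affine
  map with d_j f = c_j attains equality. That holomorphic maps are twice differentiable
  follows from the Cauchy integral formula in each variable, differentiated under the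
  integral sign.\<close>

section \<open>Functions of class C^k\<close>

lemma frechet_derivative_transform_within_open:
  assumes "open S" "\<And>x. x \<in> S \<Longrightarrow> g x = g' x" "p \<in> S" "g differentiable (at p)"
  shows "g' differentiable (at p)" and "frechet_derivative g' (at p) = frechet_derivative g (at p)"
proof -
  have "(g' has_derivative frechet_derivative g (at p)) (at p)"
    using has_derivative_transform_within_open[OF _ assms(1,3)] assms(2,4) frechet_derivative_works
    by blast
  then show "g' differentiable (at p)" "frechet_derivative g' (at p) = frechet_derivative g (at p)"
    by (auto simp: differentiable_def frechet_derivative_at[symmetric])
qed

lemma Ck_cong:
  assumes "open S" "\<And>x. x \<in> S \<Longrightarrow> g x = g' x" "Ck k S g"
  shows "Ck k S g'"
  using assms(2,3)
proof (induction k arbitrary: g g')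
  case 0
  then show ?case using continuous_on_cong[of S S g g'] by simp
next
  case (Suc k)
  have d: "\<forall>p\<in>S. g differentiable (at p)" using Suc.prems by simp
  show ?case
  proof (simp, intro conjI ballI allI)
    fix p assume "p \<in> S"
    then show "g' differentiable (at p)"
      using frechet_derivative_transform_within_open(1)[of S g g'] assms(1) Suc.prems(1) d by blast
  next
    fix v
    have "Ck k S (\<lambda>q. frechet_derivative g (at q) v)" using Suc.prems by simp
    then show "Ck k S (\<lambda>q. frechet_derivative g' (at q) v)"
      by (rule Suc.IH[rotated])
        (use frechet_derivative_transform_within_open(2)[of S g g'] assms(1) Suc.prems(1) d in simp)
  qed
qed

lemma Ck_add:
  assumes "open S" "Ck k S g" "Ck k S g'"
  shows "Ck k S (\<lambda>x. g x + g' x)"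
  using assms(2,3)
proof (induction k arbitrary: g g')
  case 0
  then show ?case by (simp add: continuous_on_add)
next
  case (Suc k)
  have "\<forall>p\<in>S. g differentiable (at p)" "\<forall>p\<in>S. g' differentiable (at p)"
    using Suc.prems by simp_all
  then have sum_rule: "((\<lambda>x. g x + g' x) has_derivative
      (\<lambda>v. frechet_derivative g (at q) v + frechet_derivative g' (at q) v)) (at q)" if "q \<in> S" for q
    using that frechet_derivative_works has_derivative_add by blast
  show ?case
  proof (simp, intro conjI ballI allI)
    fix p assume "p \<in> S"
    then show "(\<lambda>x. g x + g' x) differentiable (at p)" using sum_rule differentiable_def by blast
  next
    fix v
    have "Ck k S (\<lambda>q. frechet_derivative g (at q) v + frechet_derivative g' (at q) v)"
      using Suc.prems Suc.IH by simp
    then show "Ck k S (\<lambda>q. frechet_derivative (\<lambda>x. g x + g' x) (at q) v)"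
      by (rule Ck_cong[OF assms(1), rotated]) (simp add: frechet_derivative_at[OF sum_rule, symmetric])
  qed
qed

lemma Ck_compose_snd:
  fixes g :: "'b::real_normed_vector \<Rightarrow> real" and D :: "'a::real_normed_vector set"
  assumes "open D" "open W" "Ck k W g"
  shows "Ck k (D \<times> W) (\<lambda>p. g (snd p))"
  using assms(3)
proof (induction k arbitrary: g)
  case 0
  then show ?case
    using continuous_on_compose2[OF _ continuous_on_snd[OF continuous_on_id], of W g "D \<times> W"]
    by auto
next
  case (Suc k)
  have chain_rule: "((\<lambda>p. g (snd p)) has_derivative
      (\<lambda>v. frechet_derivative g (at (snd q)) (snd v))) (at q)" if "q \<in> D \<times> W" for q
  proof -
    have "(g has_derivative frechet_derivative g (at (snd q))) (at (snd q))"
      using that Suc.prems by (auto simp: frechet_derivative_works)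
    then show ?thesis
      using has_derivative_compose[OF has_derivative_snd[OF has_derivative_ident]] by blast
  qed
  show ?case
  proof (simp only: Ck.simps, intro conjI ballI allI)
    fix p assume "p \<in> D \<times> W"
    then show "(\<lambda>p. g (snd p)) differentiable (at p)" using chain_rule differentiable_def by blast
  next
    fix v :: "'a \<times> 'b"
    have "Ck k (D \<times> W) (\<lambda>q. frechet_derivative g (at (snd q)) (snd v))"
      using Suc.prems Suc.IH[of "\<lambda>y. frechet_derivative g (at y) (snd v)"] by simp
    then show "Ck k (D \<times> W) (\<lambda>q. frechet_derivative (\<lambda>p. g (snd p)) (at q) v)"
      by (rule Ck_cong[OF open_Times[OF assms(1,2)], rotated])
        (simp add: frechet_derivative_at[OF chain_rule, symmetric])
  qed
qed

section \<open>Second derivatives of C^2 functions\<close>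

lemma Ck2_has_derivative:
  "Ck 2 S g \<Longrightarrow> p \<in> S \<Longrightarrow> (g has_derivative frechet_derivative g (at p)) (at p)"
  by (simp add: numeral_2_eq_2 frechet_derivative_works[symmetric])

lemma Ck2_linear_derivative: "Ck 2 S g \<Longrightarrow> p \<in> S \<Longrightarrow> linear (frechet_derivative g (at p))"
  using Ck2_has_derivative has_derivative_linear by blast

lemma Ck2_has_derivative_d2:
  assumes "Ck 2 S g" "p \<in> S"
  shows "((\<lambda>q. frechet_derivative g (at q) v) has_derivative d2 g p v) (at p)"
proof -
  have "d2 g p v = frechet_derivative (\<lambda>q. frechet_derivative g (at q) v) (at p)"
    by (rule ext) (simp add: d2_def)
  then show ?thesis
    using assms by (simp add: numeral_2_eq_2 frechet_derivative_works[symmetric])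
qed

lemma Ck2_continuous_on_d2: "Ck 2 S g \<Longrightarrow> continuous_on S (\<lambda>q. d2 g q v w)"
  by (simp add: numeral_2_eq_2 d2_def)

lemma bilinear_d2:
  assumes S: "open S" and g: "Ck 2 S g" and p: "p \<in> S"
  shows "bilinear (d2 g p)"
  unfolding bilinear_def
proof (intro conjI allI)
  show "linear (\<lambda>w. d2 g p v w)" for v
    using Ck2_has_derivative_d2[OF g p] has_derivative_linear by (metis eta_contract_eq)
  show "linear (\<lambda>v. d2 g p v w)" for w
  proof (rule linearI)
    fix v1 v2
    have "((\<lambda>q. frechet_derivative g (at q) v1 + frechet_derivative g (at q) v2) has_derivative
        (\<lambda>w. d2 g p v1 w + d2 g p v2 w)) (at p)"
      using Ck2_has_derivative_d2[OF g p] has_derivative_add by blast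
    then have "((\<lambda>q. frechet_derivative g (at q) (v1 + v2)) has_derivative
        (\<lambda>w. d2 g p v1 w + d2 g p v2 w)) (at p)"
      by (rule has_derivative_transform_within_open[OF _ S p])
        (simp add: linear_add[OF Ck2_linear_derivative[OF g]])
    from fun_cong[OF frechet_derivative_at[OF this], of w]
    show "d2 g p (v1 + v2) w = d2 g p v1 w + d2 g p v2 w" by (simp add: d2_def)
  next
    fix c :: real and v
    have "((\<lambda>q. c * frechet_derivative g (at q) v) has_derivative (\<lambda>w. c * d2 g p v w)) (at p)"
      using Ck2_has_derivative_d2[OF g p] has_derivative_mult_right by blast
    then have "((\<lambda>q. frechet_derivative g (at q) (c *\<^sub>R v)) has_derivative
        (\<lambda>w. c * d2 g p v w)) (at p)"
      by (rule has_derivative_transform_within_open[OF _ S p])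
        (simp add: linear_scale[OF Ck2_linear_derivative[OF g]])
    from fun_cong[OF frechet_derivative_at[OF this], of w]
    show "d2 g p (c *\<^sub>R v) w = c *\<^sub>R d2 g p v w" by (simp add: d2_def)
  qed
qed

lemma has_real_derivative_along_line:
  assumes "(g has_derivative G) (at (x0 + t *\<^sub>R v))"
  shows "((\<lambda>t. g (x0 + t *\<^sub>R v)) has_real_derivative G v) (at t)"
proof -
  have "((\<lambda>t. x0 + t *\<^sub>R v) has_derivative (\<lambda>h. h *\<^sub>R v)) (at t)"
    by (auto intro!: derivative_eq_intros)
  from has_derivative_compose[OF this assms]
  have "((\<lambda>t. g (x0 + t *\<^sub>R v)) has_derivative (\<lambda>h. G (h *\<^sub>R v))) (at t)" .
  moreover have "(\<lambda>h. G (h *\<^sub>R v)) = (\<lambda>h. G v * h)"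
    using linear_scale[OF has_derivative_linear[OF assms]] by (simp add: mult.commute)
  ultimately show ?thesis by (simp add: has_field_derivative_def)
qed

lemma second_difference_mvt:
  fixes g :: "'a::real_normed_vector \<Rightarrow> real"
  assumes S: "open S" and g: "Ck 2 S g" and s: "s > 0"
    and box: "\<And>a b. 0 \<le> a \<Longrightarrow> a \<le> s \<Longrightarrow> 0 \<le> b \<Longrightarrow> b \<le> s \<Longrightarrow> p + a *\<^sub>R v + b *\<^sub>R w \<in> S"
  obtains a b where "0 \<le> a" "a \<le> s" "0 \<le> b" "b \<le> s"
    "g (p + s *\<^sub>R v + s *\<^sub>R w) - g (p + s *\<^sub>R v) - g (p + s *\<^sub>R w) + g p
       = s\<^sup>2 * d2 g (p + a *\<^sub>R v + b *\<^sub>R w) v w"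
proof -
  define G where "G = (\<lambda>q. frechet_derivative g (at q) v)"
  define \<phi> where "\<phi> = (\<lambda>t. g ((p + s *\<^sub>R w) + t *\<^sub>R v) - g (p + t *\<^sub>R v))"
  have "(\<phi> has_real_derivative (G ((p + s *\<^sub>R w) + t *\<^sub>R v) - G (p + t *\<^sub>R v))) (at t)"
    if "0 \<le> t" "t \<le> s" for t
  proof -
    have "(p + s *\<^sub>R w) + t *\<^sub>R v \<in> S" using box[of t s] that s by (simp add: algebra_simps)
    moreover have "p + t *\<^sub>R v \<in> S" using box[of t 0] that s by simp
    ultimately show ?thesis unfolding \<phi>_def G_def
      by (intro DERIV_diff has_real_derivative_along_line Ck2_has_derivative[OF g])
  qed
  from MVT2[OF s this] obtain \<tau> where \<tau>: "0 < \<tau>" "\<tau> < s"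
    "\<phi> s - \<phi> 0 = (s - 0) * (G ((p + s *\<^sub>R w) + \<tau> *\<^sub>R v) - G (p + \<tau> *\<^sub>R v))"
    by (metis less_eq_real_def)
  have "((\<lambda>b. G ((p + \<tau> *\<^sub>R v) + b *\<^sub>R w)) has_real_derivative
      d2 g ((p + \<tau> *\<^sub>R v) + b *\<^sub>R w) v w) (at b)" if "0 \<le> b" "b \<le> s" for b
  proof -
    have "(p + \<tau> *\<^sub>R v) + b *\<^sub>R w \<in> S" using box[of \<tau> b] that \<tau> by simp
    then show ?thesis unfolding G_def
      by (rule has_real_derivative_along_line[OF Ck2_has_derivative_d2[OF g]])
  qed
  from MVT2[OF s this] obtain \<sigma> where \<sigma>: "0 < \<sigma>" "\<sigma> < s"
    "G ((p + \<tau> *\<^sub>R v) + s *\<^sub>R w) - G ((p + \<tau> *\<^sub>R v) + 0 *\<^sub>R w)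
       = (s - 0) * d2 g ((p + \<tau> *\<^sub>R v) + \<sigma> *\<^sub>R w) v w"
    by (metis less_eq_real_def)
  have "g (p + s *\<^sub>R v + s *\<^sub>R w) - g (p + s *\<^sub>R v) - g (p + s *\<^sub>R w) + g p = \<phi> s - \<phi> 0"
    unfolding \<phi>_def by (simp add: algebra_simps)
  also have "\<dots> = s\<^sup>2 * d2 g (p + \<tau> *\<^sub>R v + \<sigma> *\<^sub>R w) v w"
    using \<tau>(3) \<sigma>(3) by (simp add: algebra_simps power2_eq_square)
  finally show ?thesis using \<tau> \<sigma> that[of \<tau> \<sigma>] by simp
qed

lemma small_parallelogram:
  fixes p v w :: "'a::real_normed_vector"
  assumes "d > 0"
  obtains s where "s > 0"
    "\<And>a b. 0 \<le> a \<Longrightarrow> a \<le> s \<Longrightarrow> 0 \<le> b \<Longrightarrow> b \<le> s \<Longrightarrow> dist (p + a *\<^sub>R v + b *\<^sub>R w) p < d"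
proof -
  define s where "s = d / (norm v + norm w + 1)"
  have N: "norm v + norm w + 1 > 0" by (simp add: add_nonneg_pos)
  then have s: "s > 0" using assms by (simp add: s_def)
  have "dist (p + a *\<^sub>R v + b *\<^sub>R w) p < d" if "0 \<le> a" "a \<le> s" "0 \<le> b" "b \<le> s" for a b
  proof -
    have "dist (p + a *\<^sub>R v + b *\<^sub>R w) p = norm (a *\<^sub>R v + b *\<^sub>R w)"
      by (simp add: dist_norm algebra_simps)
    also have "\<dots> \<le> a * norm v + b * norm w"
      using norm_triangle_ineq[of "a *\<^sub>R v" "b *\<^sub>R w"] that by simp
    also have "\<dots> \<le> s * norm v + s * norm w"
      using that by (intro add_mono mult_right_mono) auto
    also have "\<dots> < s * (norm v + norm w + 1)" using s by (simp add: algebra_simps)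
    also have "\<dots> = d" using N by (simp add: s_def)
    finally show ?thesis .
  qed
  with s that show ?thesis by blast
qed

text \<open>Schwarz's theorem: both mixed second derivatives are limits of the same second
  difference quotient, by the mean value theorem applied in either order.\<close>

lemma d2_commute:
  assumes S: "open S" and g: "Ck 2 S g" and p: "p \<in> S"
  shows "d2 g p v w = d2 g p w v"
proof (rule ccontr)
  assume "d2 g p v w \<noteq> d2 g p w v"
  then have e: "\<bar>d2 g p v w - d2 g p w v\<bar> / 2 > 0" (is "?e > 0") by simp
  obtain d1 where d1: "d1 > 0" "\<And>x. x \<in> S \<Longrightarrow> dist x p < d1 \<Longrightarrow> \<bar>d2 g x v w - d2 g p v w\<bar> < ?e"
    using Ck2_continuous_on_d2[OF g, of v w] p e unfolding continuous_on_iff dist_real_def by metis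
  obtain d2' where d2': "d2' > 0" "\<And>x. x \<in> S \<Longrightarrow> dist x p < d2' \<Longrightarrow> \<bar>d2 g x w v - d2 g p w v\<bar> < ?e"
    using Ck2_continuous_on_d2[OF g, of w v] p e unfolding continuous_on_iff dist_real_def by metis
  obtain d3 where d3: "d3 > 0" "ball p d3 \<subseteq> S" using S p open_contains_ball by blast
  define d where "d = min d1 (min d2' d3)"
  have "d > 0" using d1 d2' d3 by (simp add: d_def)
  then obtain s where s: "s > 0" and near: "\<And>a b. 0 \<le> a \<Longrightarrow> a \<le> s \<Longrightarrow> 0 \<le> b \<Longrightarrow> b \<le> s \<Longrightarrow>
      dist (p + a *\<^sub>R v + b *\<^sub>R w) p < d"
    using small_parallelogram[where p=p and v=v and w=w] by blast
  have inS: "x \<in> S" if "dist x p < d" for x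
    using that d3(2) by (auto simp: d_def dist_commute)
  have box_vw: "p + a *\<^sub>R v + b *\<^sub>R w \<in> S" and box_wv: "p + b *\<^sub>R w + a *\<^sub>R v \<in> S"
    if "0 \<le> a" "a \<le> s" "0 \<le> b" "b \<le> s" for a b
    using inS[OF near[OF that]] by (simp_all add: algebra_simps)
  obtain a1 b1 where ab1: "0 \<le> a1" "a1 \<le> s" "0 \<le> b1" "b1 \<le> s"
    "g (p + s *\<^sub>R v + s *\<^sub>R w) - g (p + s *\<^sub>R v) - g (p + s *\<^sub>R w) + g p
       = s\<^sup>2 * d2 g (p + a1 *\<^sub>R v + b1 *\<^sub>R w) v w"
    using second_difference_mvt[OF S g s, of p v w] box_vw by blast
  obtain a2 b2 where ab2: "0 \<le> a2" "a2 \<le> s" "0 \<le> b2" "b2 \<le> s"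
    "g (p + s *\<^sub>R w + s *\<^sub>R v) - g (p + s *\<^sub>R w) - g (p + s *\<^sub>R v) + g p
       = s\<^sup>2 * d2 g (p + a2 *\<^sub>R w + b2 *\<^sub>R v) w v"
    using second_difference_mvt[OF S g s, of p w v] box_wv by blast
  have "d2 g (p + a1 *\<^sub>R v + b1 *\<^sub>R w) v w = d2 g (p + b2 *\<^sub>R v + a2 *\<^sub>R w) w v"
    using ab1(5) ab2(5) s by (simp add: algebra_simps)
  moreover have "\<bar>d2 g (p + a1 *\<^sub>R v + b1 *\<^sub>R w) v w - d2 g p v w\<bar> < ?e"
    using near[OF ab1(1-4)] by (intro d1(2) inS) (auto simp: d_def)
  moreover have "\<bar>d2 g (p + b2 *\<^sub>R v + a2 *\<^sub>R w) w v - d2 g p w v\<bar> < ?e"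
    using near[OF ab2(3,4,1,2)] by (intro d2'(2) inS) (auto simp: d_def)
  ultimately show False by (simp add: abs_if split: if_splits)
qed

section \<open>Derivatives of holomorphic maps are holomorphic\<close>

lemma norm_axis: "norm (axis k (x::'a::real_normed_vector)) = norm x"
proof -
  have "(\<Sum>i\<in>UNIV. (norm (axis k x $ i))\<^sup>2) = (\<Sum>i\<in>UNIV. if i = k then (norm x)\<^sup>2 else 0)"
    by (rule sum.cong) (auto simp: axis_def)
  then show ?thesis by (simp add: norm_vec_def L2_set_def)
qed

lemma bounded_linear_axis: "bounded_linear (axis k :: 'a::real_normed_vector \<Rightarrow> 'a^'m)"
proof (rule bounded_linear_intro[where K=1])
  show "axis k (x + y) = axis k x + axis k y" for x y :: 'a by (auto simp: vec_eq_iff axis_def)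
  show "axis k (r *\<^sub>R x) = r *\<^sub>R axis k x" for r and x :: 'a by (auto simp: vec_eq_iff axis_def)
  show "norm (axis k x) \<le> norm x * 1" for x :: 'a by (simp add: norm_axis)
qed

lemma continuous_on_axis [continuous_intros]:
  "continuous_on S (g :: _ \<Rightarrow> 'b::real_normed_vector) \<Longrightarrow> continuous_on S (\<lambda>x. (axis k (g x) :: 'b^'m))"
  using continuous_on_compose2[OF linear_continuous_on[OF bounded_linear_axis[where k=k]], of S g]
  by auto

lemma axis_eq_smult_axis_1: "axis k (t::'a::semiring_1) = t *s axis k 1"
  by (simp add: vec_eq_iff axis_def)

lemma complex_homogeneous_eq_sum_axis:
  fixes L :: "complex^'m \<Rightarrow> complex"
  assumes "linear L" "\<And>c v. L (c *s v) = c * L v"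
  shows "L v = (\<Sum>j\<in>UNIV. v $ j * L (axis j 1))"
proof -
  have "L v = L (\<Sum>j\<in>UNIV. (v $ j) *s axis j 1)" by (simp add: basis_expansion)
  also have "\<dots> = (\<Sum>j\<in>UNIV. v $ j * L (axis j 1))"
    by (simp add: linear_sum[OF assms(1)] assms(2))
  finally show ?thesis .
qed

lemma norm_circlepath_0: "r \<ge> 0 \<Longrightarrow> norm (circlepath 0 r x) = r"
  by (simp add: circlepath norm_mult norm_exp_eq_Re)

lemma circlepath_0_nonzero: "r > 0 \<Longrightarrow> circlepath 0 r x \<noteq> 0"
  by (simp add: circlepath)

lemma continuous_on_circlepath_0 [continuous_intros]:
  "continuous_on S g \<Longrightarrow> continuous_on S (\<lambda>x. circlepath 0 r (g x))"
  unfolding circlepath by (intro continuous_intros)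

text \<open>The Cauchy formula for the first derivative, parametrised over [0, 1]:
  the factor 2 pi i from the parametrisation cancels the one in the formula.\<close>

lemma deriv_Cauchy_has_integral_01:
  fixes g :: "complex \<Rightarrow> complex"
  assumes S: "open S" and r: "r > 0" and sub: "cball 0 r \<subseteq> S" and hol: "g holomorphic_on S"
  shows "((\<lambda>x. inverse (circlepath 0 r x) * g (circlepath 0 r x)) has_integral deriv g 0) {0..1}"
proof -
  have "continuous_on (cball 0 r) g"
    using holomorphic_on_imp_continuous_on[OF hol] continuous_on_subset sub by blast
  moreover have "g holomorphic_on ball 0 r"
    using hol sub ball_subset_cball holomorphic_on_subset by blast
  ultimately have "((\<lambda>u. g u / u ^ 2) has_contour_integral (2 * of_real pi * \<i> * deriv g 0))
      (circlepath 0 r)"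
    using Cauchy_has_contour_integral_higher_derivative_circlepath[of 0 r g 0 1] r
    by (simp add: numeral_2_eq_2)
  then have "((\<lambda>x. g (circlepath 0 r x) / (circlepath 0 r x) ^ 2
      * vector_derivative (circlepath 0 r) (at x within {0..1}))
      has_integral (2 * of_real pi * \<i> * deriv g 0)) {0..1}"
    unfolding has_contour_integral_def .
  then have "((\<lambda>x. (2 * of_real pi * \<i>) * (inverse (circlepath 0 r x) * g (circlepath 0 r x)))
      has_integral (2 * of_real pi * \<i> * deriv g 0)) {0..1}"
  proof (rule has_integral_eq[rotated])
    fix x :: real assume "x \<in> {0..1}"
    then have "vector_derivative (circlepath 0 r) (at x within {0..1}) = 2 * pi * \<i> * circlepath 0 r x"
      using vector_derivative_circlepath01[of x 0 r] by (simp add: circlepath)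
    then show "g (circlepath 0 r x) / (circlepath 0 r x) ^ 2
        * vector_derivative (circlepath 0 r) (at x within {0..1})
        = (2 * of_real pi * \<i>) * (inverse (circlepath 0 r x) * g (circlepath 0 r x))"
      using circlepath_0_nonzero[OF r, of x] by (simp add: field_simps power2_eq_square)
  qed
  then show ?thesis
    by (subst (asm) has_integral_mult_right_iff) auto
qed

text \<open>Circles of radius r centred in ball p r, and the discs of radius 2 r around those
  centres used for the Cauchy formula, stay inside ball p (3 r).\<close>

lemma add_axis_in_ball:
  assumes "q \<in> ball p r" "norm t < 2 * r"
  shows "q + axis k t \<in> ball p (3 * r)"
proof -
  have "dist p (q + axis k t) \<le> dist p q + dist q (q + axis k t)" by (rule dist_triangle)
  also have "dist q (q + axis k t) = norm t" by (simp add: dist_norm norm_axis)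
  finally show ?thesis using assms by simp
qed

lemma add_axis_circlepath_in:
  assumes r: "r > 0" and sub: "ball p (3 * r) \<subseteq> U" and q: "q \<in> ball p r"
  shows "q + axis k (circlepath 0 r x) \<in> U"
  using add_axis_in_ball[OF q, of "circlepath 0 r x" k] sub norm_circlepath_0[of r x] r by auto

lemma continuous_on_circle_integrand:
  assumes r: "r > 0" and sub: "ball p (3 * r) \<subseteq> U" and h: "continuous_on U h"
  shows "continuous_on (ball p r \<times> cbox 0 1)
    (\<lambda>(q, x). inverse (circlepath 0 r x) * h (q + axis k (circlepath 0 r x)))"
proof -
  have "continuous_on (ball p r \<times> cbox 0 1)
      (\<lambda>y. fst y + axis k (circlepath 0 r (snd y)))"
    by (intro continuous_intros)
  then have "continuous_on (ball p r \<times> cbox 0 1)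
      (\<lambda>y. h (fst y + axis k (circlepath 0 r (snd y))))"
    by (rule continuous_on_compose2[OF h]) (auto intro: add_axis_circlepath_in[OF r sub])
  moreover have "continuous_on (ball p r \<times> cbox 0 1)
      (\<lambda>y. inverse (circlepath 0 r (snd y)))"
    by (intro continuous_intros) (simp add: circlepath_0_nonzero[OF r])
  ultimately show ?thesis
    using continuous_on_mult by (fastforce simp: case_prod_beta')
qed

lemma open_contains_ball_3:
  assumes "open U" "p \<in> U"
  obtains r where "r > 0" "ball p (3 * r) \<subseteq> U"
proof -
  obtain e where "e > 0" "ball p e \<subseteq> U" using assms open_contains_ball by blast
  then show ?thesis using that[of "e / 3"] by simp
qed

locale scalar_holomorphic =
  fixes U :: "(complex^'m) set" and \<phi> :: "complex^'m \<Rightarrow> complex"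
    and D\<phi> :: "complex^'m \<Rightarrow> complex^'m \<Rightarrow> complex"
  assumes open_U: "open U"
    and has_derivative_\<phi>: "\<And>q. q \<in> U \<Longrightarrow> (\<phi> has_derivative D\<phi> q) (at q)"
    and D\<phi>_homogeneous: "\<And>q c v. q \<in> U \<Longrightarrow> D\<phi> q (c *s v) = c * D\<phi> q v"
begin

lemma D\<phi>_eq_sum_axis: "q \<in> U \<Longrightarrow> D\<phi> q v = (\<Sum>j\<in>UNIV. v $ j * D\<phi> q (axis j 1))"
  by (rule complex_homogeneous_eq_sum_axis[OF has_derivative_linear[OF has_derivative_\<phi>]])
    (simp_all add: D\<phi>_homogeneous)

lemma partial_derivative_has_integral:
  assumes r: "r > 0" and sub: "ball p (3 * r) \<subseteq> U" and q: "q \<in> ball p r"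
  shows "((\<lambda>x. inverse (circlepath 0 r x) * \<phi> (q + axis k (circlepath 0 r x)))
    has_integral D\<phi> q (axis k 1)) {0..1}"
proof -
  define g where "g t = \<phi> (q + axis k t)" for t
  have g_deriv: "(g has_field_derivative D\<phi> (q + axis k t) (axis k 1)) (at t)"
    if "t \<in> ball 0 (2 * r)" for t
  proof -
    have inU: "q + axis k t \<in> U" using add_axis_in_ball[OF q, of t k] that sub by auto
    have "((\<lambda>t. q + axis k t) has_derivative axis k) (at t)"
      using has_derivative_add[OF has_derivative_const bounded_linear.has_derivative[OF
          bounded_linear_axis has_derivative_ident]] by simp
    from has_derivative_compose[OF this has_derivative_\<phi>[OF inU]]
    have "(g has_derivative (\<lambda>h. D\<phi> (q + axis k t) (axis k h))) (at t)" unfolding g_def .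
    moreover have "(\<lambda>h. D\<phi> (q + axis k t) (axis k h)) = (*) (D\<phi> (q + axis k t) (axis k 1))"
    proof
      fix h
      show "D\<phi> (q + axis k t) (axis k h) = D\<phi> (q + axis k t) (axis k 1) * h"
        using D\<phi>_homogeneous[OF inU, of h "axis k 1"] axis_eq_smult_axis_1[of k h]
        by (simp add: mult.commute)
    qed
    ultimately show ?thesis by (simp add: has_field_derivative_def)
  qed
  have "g holomorphic_on ball 0 (2 * r)"
    unfolding holomorphic_on_open[OF open_ball] using g_deriv by blast
  moreover have "cball 0 r \<subseteq> ball (0::complex) (2 * r)" using r by (auto simp: subset_eq)
  ultimately have "((\<lambda>x. inverse (circlepath 0 r x) * g (circlepath 0 r x)) has_integral deriv g 0) {0..1}"
    using deriv_Cauchy_has_integral_01[OF open_ball r] by blast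
  moreover have "deriv g 0 = D\<phi> q (axis k 1)"
  proof -
    have "(0::complex) \<in> ball 0 (2 * r)" using r by simp
    moreover have "axis k (0::complex) = 0" by simp
    ultimately show ?thesis using DERIV_imp_deriv[OF g_deriv] by (simp only: add_0_right)
  qed
  ultimately show ?thesis by (simp add: g_def)
qed

lemma partial_derivative_eq_integral:
  assumes r: "r > 0" and sub: "ball p (3 * r) \<subseteq> U" and q: "q \<in> ball p r"
  shows "D\<phi> q (axis k 1)
    = integral (cbox 0 1) (\<lambda>x. inverse (circlepath 0 r x) * \<phi> (q + axis k (circlepath 0 r x)))"
  using integral_unique[OF partial_derivative_has_integral[OF assms, of k]] by simp

lemma continuous_on_D\<phi>: "continuous_on U (\<lambda>q. D\<phi> q v)"
proof -
  have "continuous_on U (\<lambda>q. D\<phi> q (axis k 1))" for k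
  proof (rule continuous_at_imp_continuous_on, rule ballI)
    fix p assume "p \<in> U"
    then obtain r where r: "r > 0" "ball p (3 * r) \<subseteq> U"
      using open_contains_ball_3[OF open_U] by blast
    have "continuous_on U \<phi>"
      using has_derivative_\<phi> has_derivative_continuous continuous_at_imp_continuous_on by blast
    then have "continuous_on (ball p r) (\<lambda>q. integral (cbox 0 1)
        (\<lambda>x. inverse (circlepath 0 r x) * \<phi> (q + axis k (circlepath 0 r x))))"
      by (intro integral_continuous_on_param continuous_on_circle_integrand[OF r])
    then have "continuous_on (ball p r) (\<lambda>q. D\<phi> q (axis k 1))"
      by (rule continuous_on_cong[THEN iffD1, rotated 2])
        (auto simp: partial_derivative_eq_integral[OF r])
    then show "isCont (\<lambda>q. D\<phi> q (axis k 1)) p"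
      using continuous_on_eq_continuous_at[OF open_ball] r(1) by force
  qed
  then have "continuous_on U (\<lambda>q. \<Sum>j\<in>UNIV. v $ j * D\<phi> q (axis j 1))"
    by (intro continuous_intros)
  then show ?thesis
    by (rule continuous_on_cong[THEN iffD1, rotated 2]) (auto simp: D\<phi>_eq_sum_axis)
qed

lemma Cauchy_integrand_derivative:
  fixes k :: 'm
  assumes r: "r > 0" and sub: "ball p (3 * r) \<subseteq> U"
  defines "fx \<equiv> \<lambda>q x. Blinfun (\<lambda>w. inverse (circlepath 0 r x) * D\<phi> (q + axis k (circlepath 0 r x)) w)"
  shows "\<And>q x. q \<in> ball p r \<Longrightarrow>
      blinfun_apply (fx q x) = (\<lambda>w. inverse (circlepath 0 r x) * D\<phi> (q + axis k (circlepath 0 r x)) w)"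
    and "continuous_on (ball p r \<times> cbox 0 1) (\<lambda>(q, x). fx q x)"
proof -
  show fx_apply: "blinfun_apply (fx q x)
      = (\<lambda>w. inverse (circlepath 0 r x) * D\<phi> (q + axis k (circlepath 0 r x)) w)"
    if "q \<in> ball p r" for q x
  proof -
    have "bounded_linear (\<lambda>w. inverse (circlepath 0 r x) * D\<phi> (q + axis k (circlepath 0 r x)) w)"
      using bounded_linear_compose[OF bounded_linear_mult_right has_derivative_bounded_linear[OF
            has_derivative_\<phi>[OF add_axis_circlepath_in[OF r sub that]]]] by simp
    then show ?thesis unfolding fx_def by (rule bounded_linear_Blinfun_apply)
  qed
  show "continuous_on (ball p r \<times> cbox 0 1) (\<lambda>(q, x). fx q x)"
  proof (rule continuous_on_blinfun_componentwise)
    fix i :: "complex^'m"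
    show "continuous_on (ball p r \<times> cbox 0 1) (\<lambda>y. blinfun_apply ((\<lambda>(q, x). fx q x) y) i)"
      using continuous_on_circle_integrand[OF r sub continuous_on_D\<phi>[of i], of k]
      by (rule continuous_on_cong[THEN iffD1, rotated 2]) (auto simp: fx_apply)
  qed
qed

text \<open>Differentiation under the integral sign in the Cauchy formula.\<close>

lemma partial_derivative_has_derivative:
  assumes r: "r > 0" and sub: "ball p (3 * r) \<subseteq> U"
  shows "((\<lambda>q. D\<phi> q (axis k 1)) has_derivative (\<lambda>w. integral (cbox 0 1)
    (\<lambda>x. inverse (circlepath 0 r x) * D\<phi> (p + axis k (circlepath 0 r x)) w))) (at p)"
proof -
  define c where "c = circlepath 0 r"
  define f where "f q x = inverse (c x) * \<phi> (q + axis k (c x))" for q x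
  define fx where "fx q x = Blinfun (\<lambda>w. inverse (c x) * D\<phi> (q + axis k (c x)) w)" for q x
  note fx = Cauchy_integrand_derivative[OF r sub, where k=k, folded c_def, folded fx_def]
  have p: "p \<in> ball p r" using r by simp
  have "((\<lambda>q. integral (cbox 0 1) (f q)) has_derivative blinfun_apply (integral (cbox 0 1) (fx p)))
      (at p within ball p r)"
  proof (rule leibniz_rule[OF _ _ fx(2) p convex_ball])
    fix q x assume q: "q \<in> ball p r"
    have "((\<lambda>q. q + axis k (c x)) has_derivative (\<lambda>h. h)) (at q)"
      using has_derivative_add[OF has_derivative_ident has_derivative_const] by simp
    from has_derivative_compose[OF this has_derivative_\<phi>[OF add_axis_circlepath_in[OF r sub q, folded c_def]]]
    show "((\<lambda>q. f q x) has_derivative blinfun_apply (fx q x)) (at q within ball p r)"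
      unfolding fx(1)[OF q] f_def c_def by (rule has_derivative_at_withinI[OF has_derivative_mult_right])
  next
    fix q assume "q \<in> ball p r"
    then show "f q integrable_on cbox 0 1"
      using has_integral_integrable[OF partial_derivative_has_integral[OF r sub, of q k]]
      by (simp add: f_def[abs_def] c_def)
  qed
  then have "((\<lambda>q. integral (cbox 0 1) (f q)) has_derivative
      blinfun_apply (integral (cbox 0 1) (fx p))) (at p)"
    using at_within_open[OF p open_ball] by simp
  then have deriv: "((\<lambda>q. D\<phi> q (axis k 1)) has_derivative blinfun_apply (integral (cbox 0 1) (fx p)))
      (at p)"
    by (rule has_derivative_transform_within_open[OF _ open_ball p])
      (simp add: partial_derivative_eq_integral[OF r sub] f_def[abs_def] c_def)
  have "fx p integrable_on cbox 0 1"
  proof (rule integrable_continuous)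
    have "continuous_on (cbox 0 1) (\<lambda>x::real. (p, x))" by (intro continuous_intros)
    moreover have "(\<lambda>x. (p, x)) ` cbox 0 1 \<subseteq> ball p r \<times> cbox 0 1" using p by auto
    ultimately show "continuous_on (cbox 0 1) (fx p)"
      using continuous_on_compose2[OF fx(2)] by fastforce
  qed
  then have "blinfun_apply (integral (cbox 0 1) (fx p))
      = (\<lambda>w. integral (cbox 0 1) (\<lambda>x. inverse (c x) * D\<phi> (p + axis k (c x)) w))"
    by (intro ext) (simp add: blinfun_apply_integral fx(1)[OF p])
  with deriv show ?thesis by (simp add: c_def)
qed

lemma partial_derivative_holomorphic:
  assumes "p \<in> U"
  shows "\<exists>L. ((\<lambda>q. D\<phi> q (axis k 1)) has_derivative L) (at p) \<and> (\<forall>c w. L (c *s w) = c * L w)"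
proof -
  obtain r where r: "r > 0" "ball p (3 * r) \<subseteq> U"
    using open_contains_ball_3[OF open_U assms] by blast
  have "D\<phi> (p + axis k (circlepath 0 r x)) (c *s w) = c * D\<phi> (p + axis k (circlepath 0 r x)) w"
    for c w x
    using r D\<phi>_homogeneous add_axis_circlepath_in[OF r, of p k x] by simp
  then show ?thesis
    using partial_derivative_has_derivative[OF r, of k] by (auto simp: mult.left_commute)
qed

lemma D\<phi>_holomorphic:
  assumes p: "p \<in> U"
  shows "\<exists>L. ((\<lambda>q. D\<phi> q v) has_derivative L) (at p) \<and> (\<forall>c w. L (c *s w) = c * L w)"
proof -
  obtain L where L: "\<And>k. ((\<lambda>q. D\<phi> q (axis k 1)) has_derivative L k) (at p)"
    "\<And>k c w. L k (c *s w) = c * L k w"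
    using partial_derivative_holomorphic[OF p] by metis
  have "((\<lambda>q. \<Sum>j\<in>UNIV. v $ j * D\<phi> q (axis j 1)) has_derivative (\<lambda>w. \<Sum>j\<in>UNIV. v $ j * L j w)) (at p)"
    by (intro has_derivative_sum has_derivative_mult_right L)
  then have "((\<lambda>q. D\<phi> q v) has_derivative (\<lambda>w. \<Sum>j\<in>UNIV. v $ j * L j w)) (at p)"
    by (rule has_derivative_transform_within_open[OF _ open_U p]) (simp add: D\<phi>_eq_sum_axis)
  moreover have "(\<Sum>j\<in>UNIV. v $ j * L j (c *s w)) = c * (\<Sum>j\<in>UNIV. v $ j * L j w)" for c w
    by (simp add: L(2) sum_distrib_left mult.left_commute)
  ultimately show ?thesis by blast
qed

end

lemma has_derivative_vec_lambda:
  fixes X :: "'a::real_normed_vector \<Rightarrow> 'b::euclidean_space ^'n"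
  assumes "\<And>i. ((\<lambda>q. X q $ i) has_derivative L i) (at z)"
  shows "(X has_derivative (\<lambda>w. \<chi> i. L i w)) (at z)"
proof -
  have "((\<lambda>q. X q \<bullet> b) has_derivative (\<lambda>w. (\<chi> i. L i w) \<bullet> b)) (at z within UNIV)"
    if "b \<in> Basis" for b
  proof -
    obtain i u where b: "b = axis i u" "u \<in> Basis" using \<open>b \<in> Basis\<close> unfolding Basis_vec_def by blast
    have "((\<lambda>q. X q $ i \<bullet> u) has_derivative (\<lambda>w. L i w \<bullet> u)) (at z)"
      by (rule bounded_linear.has_derivative[OF bounded_linear_inner_left assms])
    then show ?thesis by (simp add: b inner_axis)
  qed
  then show ?thesis using has_derivative_componentwise_within[of X _ z UNIV] by simp
qed

lemma holo_on_has_derivative: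
  assumes "holo_on U f" "q \<in> U"
  shows "(f has_derivative frechet_derivative f (at q)) (at q)"
    and "frechet_derivative f (at q) (c *s w) = c *s frechet_derivative f (at q) w"
proof -
  obtain L where "(f has_derivative L) (at q)" "\<forall>c v. L (c *s v) = c *s L v"
    using assms unfolding holo_on_def by blast
  moreover from this(1) have "frechet_derivative f (at q) = L" by (rule frechet_derivative_at[symmetric])
  ultimately show "(f has_derivative frechet_derivative f (at q)) (at q)"
    and "frechet_derivative f (at q) (c *s w) = c *s frechet_derivative f (at q) w" by simp_all
qed

lemma holo_on_derivative_holomorphic:
  fixes f :: "complex^'m \<Rightarrow> complex^'n"
  assumes U: "open U" and hol: "holo_on U f" and p: "p \<in> U"
  shows "\<exists>L. ((\<lambda>q. frechet_derivative f (at q) v) has_derivative L) (at p) \<and> (\<forall>c w. L (c *s w) = c *s L w)"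
proof -
  have "\<exists>L. ((\<lambda>q. frechet_derivative f (at q) v $ i) has_derivative L) (at p) \<and> (\<forall>c w. L (c *s w) = c * L w)"
    for i
  proof -
    interpret scalar_holomorphic U "\<lambda>q. f q $ i" "\<lambda>q v. frechet_derivative f (at q) v $ i"
    proof
      show "((\<lambda>q. f q $ i) has_derivative (\<lambda>v. frechet_derivative f (at q) v $ i)) (at q)" if "q \<in> U" for q
        by (rule bounded_linear.has_derivative[OF bounded_linear_vec_nth holo_on_has_derivative(1)[OF hol that]])
    qed (simp_all add: U holo_on_has_derivative(2)[OF hol])
    show ?thesis by (rule D\<phi>_holomorphic[OF p])
  qed
  then obtain L where L: "\<And>i. ((\<lambda>q. frechet_derivative f (at q) v $ i) has_derivative L i) (at p)"
    "\<And>i c w. L i (c *s w) = c * L i w"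
    by metis
  have "((\<lambda>q. frechet_derivative f (at q) v) has_derivative (\<lambda>w. \<chi> i. L i w)) (at p)"
    by (rule has_derivative_vec_lambda[OF L(1)])
  moreover have "(\<chi> i. L i (c *s w)) = c *s (\<chi> i. L i w)" for c w
    by (simp add: vec_eq_iff L(2))
  ultimately show ?thesis by blast
qed

section \<open>Hermitian forms and Schur complements\<close>

lemma sum_UNIV_option: "(\<Sum>a\<in>(UNIV :: 'n::finite option set). g a) = g None + (\<Sum>m\<in>UNIV. g (Some m))"
  by (simp add: UNIV_option_conv sum.reindex image_iff)

lemma prod_UNIV_option: "(\<Prod>a\<in>(UNIV :: 'n::finite option set). g a) = g None * (\<Prod>m\<in>UNIV. g (Some m))"
  by (simp add: UNIV_option_conv prod.reindex image_iff)

lemma map_option_eq_map_permutation: "map_option s = map_permutation UNIV Some s"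
proof
  fix y :: "'a option"
  show "map_option s y = map_permutation UNIV Some s y"
    by (cases y) (simp_all add: map_permutation_def restrict_id_def)
qed

lemma permutes_fixing_None_eq_image_map_option:
  "{p. p permutes (UNIV :: 'n option set) \<and> p None = None} = map_option ` {s. s permutes (UNIV :: 'n set)}"
proof (intro equalityI subsetI)
  fix p assume "p \<in> {p. p permutes (UNIV :: 'n option set) \<and> p None = None}"
  then have "p permutes UNIV" and "p None = None" by simp_all
  from this(1) have p: "p permutes range Some"
  proof (rule permutes_superset)
    fix x :: "'n option" assume "x \<in> UNIV - range Some"
    then have "x = None" by (cases x) auto
    then show "p x = x" using \<open>p None = None\<close> by simp
  qed
  have the: "bij_betw the (range Some) (UNIV :: 'n set)"
    by (rule bij_betw_byWitness[where f'=Some]) auto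
  have "map_permutation (range Some) the p permutes UNIV"
    by (rule map_permutation_permutes[OF the p])
  moreover have "map_option (map_permutation (range Some) the p) = p"
    unfolding map_option_eq_map_permutation by (rule map_permutation_compose_inv[OF the p]) auto
  ultimately show "p \<in> map_option ` {s. s permutes UNIV}" by (metis (mono_tags) image_eqI mem_Collect_eq)
next
  fix p assume "p \<in> map_option ` {s. s permutes (UNIV :: 'n set)}"
  then obtain s where s: "s permutes UNIV" and p: "p = map_option s" by blast
  have "map_option s permutes UNIV"
    unfolding map_option_eq_map_permutation
    by (rule permutes_subset[OF map_permutation_permutes[OF _ s]]) (simp_all add: bij_betw_def)
  then show "p \<in> {p. p permutes UNIV \<and> p None = None}" by (simp add: p)
qed

lemma det_option_block:
  fixes A :: "'a::comm_ring_1^('n::finite option)^('n option)"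
  assumes zero: "\<And>l. A $ None $ Some l = 0"
  shows "det A = A $ None $ None * det (\<chi> m l. A $ Some m $ Some l)"
proof -
  let ?t = "\<lambda>p. of_int (sign p) * (\<Prod>i\<in>UNIV. A $ i $ p i)"
  let ?S = "{p. p permutes (UNIV :: 'n option set) \<and> p None = None}"
  have "det A = sum ?t ?S"
    unfolding det_def
  proof (rule sum.mono_neutral_right)
    show "\<forall>p \<in> {p. p permutes UNIV} - ?S. ?t p = 0"
    proof
      fix p assume "p \<in> {p. p permutes UNIV} - ?S"
      then obtain l where "p None = Some l" by auto
      then show "?t p = 0" by (simp add: prod_UNIV_option zero)
    qed
  qed (auto simp: finite_permutations)
  also have "\<dots> = (\<Sum>s\<in>{s. s permutes UNIV}. ?t (map_option s))"
    unfolding permutes_fixing_None_eq_image_map_option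
    by (rule sum.reindex[unfolded comp_def]) (auto simp: inj_on_def fun_eq_iff option.map_sel
        dest: spec[where x="Some _"])
  also have "\<dots> = A $ None $ None * det (\<chi> m l. A $ Some m $ Some l)"
    unfolding det_def sum_distrib_left
  proof (rule sum.cong[OF refl])
    fix s assume "s \<in> {s. s permutes (UNIV :: 'n set)}"
    then have "sign (map_option s) = sign s"
      unfolding map_option_eq_map_permutation by (intro sign_map_permutation) auto
    then show "?t (map_option s)
        = A $ None $ None * (of_int (sign s) * (\<Prod>i\<in>UNIV. (\<chi> m l. A $ Some m $ Some l) $ i $ s i))"
      by (simp add: prod_UNIV_option algebra_simps)
  qed
  finally show ?thesis .
qed

text \<open>Adding the combination c of the lower rows to the row None clears that row
  off the diagonal without changing the determinant.\<close>

lemma det_Schur_complement: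
  fixes H :: "'a::field^('n::finite option)^('n option)" and c :: "'a^'n"
  assumes eq: "\<And>l. (\<Sum>m\<in>UNIV. c $ m * H $ Some m $ Some l) = - H $ None $ Some l"
  shows "det H = (H $ None $ None + (\<Sum>m\<in>UNIV. c $ m * H $ Some m $ None))
    * det (\<chi> m l. H $ Some m $ Some l)"
proof -
  define R where "R = (\<Sum>m\<in>UNIV. c $ m *s row (Some m) H)"
  define H' where "H' = (\<chi> a. if a = None then row None H + R else row a H)"
  have "det (\<chi> a. if a = None then R else row a H)
      = (\<Sum>m\<in>UNIV. c $ m * det (\<chi> a. if a = None then row (Some m) H else row a H))"
    unfolding R_def by (subst det_linear_row_sum) (simp_all add: det_row_mul)
  also have "\<dots> = 0"
  proof (rule sum.neutral, rule ballI)
    fix m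
    have "det (\<chi> a. if a = None then row (Some m) H else row a H) = 0"
      by (rule det_identical_rows[of None "Some m"]) (auto simp: row_def vec_eq_iff)
    then show "c $ m * det (\<chi> a. if a = None then row (Some m) H else row a H) = 0" by simp
  qed
  moreover have "(\<chi> a. if a = None then row None H else row a H) = H"
    by (simp add: vec_eq_iff row_def)
  ultimately have "det H' = det H"
    unfolding H'_def by (simp add: det_row_add)
  moreover have "det H' = H' $ None $ None * det (\<chi> m l. H' $ Some m $ Some l)"
    by (rule det_option_block) (simp add: H'_def R_def row_def sum_component eq)
  ultimately show ?thesis by (simp add: H'_def R_def row_def sum_component)
qed

lemma pos_herm_det_nonzero:
  fixes M :: "complex^'n^'n"
  assumes "pos_herm M"
  shows "det M \<noteq> 0"
proof
  assume "det M = 0"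
  then have "\<not> invertible (transpose M)" by (simp add: invertible_det_nz)
  then obtain x where x: "transpose M *v x = 0" "x \<noteq> 0"
    using invertible_left_inverse matrix_left_invertible_ker by blast
  have "(\<Sum>m\<in>UNIV. \<Sum>l\<in>UNIV. M $ m $ l * x $ m * cnj (x $ l))
      = (\<Sum>l\<in>UNIV. cnj (x $ l) * (transpose M *v x) $ l)"
    by (subst sum.swap) (simp add: matrix_vector_mult_def transpose_def sum_distrib_left algebra_simps)
  also have "\<dots> = 0" using x(1) by simp
  finally show False using assms x(2) unfolding pos_herm_def by fastforce
qed

lemma exists_left_solution:
  fixes M :: "'a::field^'n^'n"
  assumes "det M \<noteq> 0"
  obtains c where "\<And>l. (\<Sum>m\<in>UNIV. c $ m * M $ m $ l) = r $ l"
proof -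
  obtain B where B: "transpose M ** B = mat 1"
    using assms invertible_det_nz invertible_right_inverse det_transpose by metis
  then have "transpose M *v (B *v r) = r" by (simp add: matrix_vector_mul_assoc)
  then show ?thesis
    by (intro that[of "B *v r"]) (simp add: vec_eq_iff matrix_vector_mult_def transpose_def mult.commute)
qed

text \<open>hform H c is the Hermitian form of H evaluated at the vector (1, c): the index None
  is the first coordinate.\<close>

definition ext1 :: "'a::one^'n \<Rightarrow> 'n option \<Rightarrow> 'a" where
  "ext1 c a = (case a of None \<Rightarrow> 1 | Some m \<Rightarrow> c $ m)"

definition hform :: "complex^('n::finite option)^('n option) \<Rightarrow> complex^'n \<Rightarrow> complex" where
  "hform H c = (\<Sum>a\<in>UNIV. \<Sum>b\<in>UNIV. ext1 c a * cnj (ext1 c b) * H $ a $ b)"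

lemma hform_expand:
  "hform H c = H $ None $ None + (\<Sum>l\<in>UNIV. cnj (c $ l) * H $ None $ Some l)
     + (\<Sum>m\<in>UNIV. c $ m * H $ Some m $ None)
     + (\<Sum>m\<in>UNIV. \<Sum>l\<in>UNIV. c $ m * cnj (c $ l) * H $ Some m $ Some l)"
  by (simp add: hform_def sum_UNIV_option ext1_def sum.distrib algebra_simps)

lemma hform_critical_value:
  assumes eq: "\<And>l. (\<Sum>m\<in>UNIV. c0 $ m * H $ Some m $ Some l) = - H $ None $ Some l"
  shows "hform H c0 = H $ None $ None + (\<Sum>m\<in>UNIV. c0 $ m * H $ Some m $ None)"
proof -
  have "(\<Sum>m\<in>UNIV. \<Sum>l\<in>UNIV. c0 $ m * cnj (c0 $ l) * H $ Some m $ Some l)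
      = (\<Sum>l\<in>UNIV. cnj (c0 $ l) * (\<Sum>m\<in>UNIV. c0 $ m * H $ Some m $ Some l))"
    by (subst sum.swap) (simp add: sum_distrib_left algebra_simps)
  also have "\<dots> = - (\<Sum>l\<in>UNIV. cnj (c0 $ l) * H $ None $ Some l)"
    by (simp add: eq sum_negf)
  finally show ?thesis by (simp add: hform_expand)
qed

lemma hform_shift:
  fixes H :: "complex^('n::finite option)^('n option)"
  assumes herm: "\<And>a b. H $ b $ a = cnj (H $ a $ b)"
    and eq: "\<And>l. (\<Sum>m\<in>UNIV. c0 $ m * H $ Some m $ Some l) = - H $ None $ Some l"
  shows "hform H (c0 + d) = hform H c0 + (\<Sum>m\<in>UNIV. \<Sum>l\<in>UNIV. d $ m * cnj (d $ l) * H $ Some m $ Some l)"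
proof -
  define Q where "Q e f = (\<Sum>m\<in>UNIV. \<Sum>l\<in>UNIV. e $ m * cnj (f $ l) * H $ Some m $ Some l)"
    for e f :: "complex^'n"
  have Q_left: "Q c0 e = - (\<Sum>l\<in>UNIV. cnj (e $ l) * H $ None $ Some l)" for e
  proof -
    have "Q c0 e = (\<Sum>l\<in>UNIV. cnj (e $ l) * (\<Sum>m\<in>UNIV. c0 $ m * H $ Some m $ Some l))"
      unfolding Q_def by (subst sum.swap) (simp add: sum_distrib_left algebra_simps)
    then show ?thesis by (simp add: eq sum_negf)
  qed
  have Q_right: "Q e c0 = - (\<Sum>m\<in>UNIV. e $ m * H $ Some m $ None)" for e
  proof -
    have "Q e c0 = cnj (Q c0 e)"
      unfolding Q_def by (subst (2) sum.swap) (simp add: herm[symmetric] algebra_simps)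
    then show ?thesis by (simp add: Q_left herm[symmetric])
  qed
  have "Q (c0 + d) (c0 + d) = Q c0 c0 + Q c0 d + Q d c0 + Q d d"
    unfolding Q_def by (simp add: sum.distrib algebra_simps)
  then show ?thesis
    using hform_expand[of H "c0 + d"] hform_expand[of H c0] unfolding Q_def[symmetric]
    by (simp add: Q_left Q_right sum.distrib algebra_simps)
qed

lemma hform_minimum:
  fixes H :: "complex^('n::finite option)^('n option)"
  assumes herm: "\<And>a b. H $ b $ a = cnj (H $ a $ b)"
    and pos: "pos_herm (\<chi> m l. H $ Some m $ Some l)"
    and eq: "\<And>l. (\<Sum>m\<in>UNIV. c0 $ m * H $ Some m $ Some l) = - H $ None $ Some l"
  shows "Re (hform H c0) \<le> Re (hform H c)"
proof -
  have "0 \<le> Re (\<Sum>m\<in>UNIV. \<Sum>l\<in>UNIV. (c - c0) $ m * cnj ((c - c0) $ l) * H $ Some m $ Some l)"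
    using pos unfolding pos_herm_def
    by (cases "c = c0") (auto simp: algebra_simps dest!: spec[of _ "c - c0"])
  moreover have "hform H c = hform H (c0 + (c - c0))" by simp
  ultimately show ?thesis by (simp only: hform_shift[OF herm eq]) simp
qed

section \<open>The complex Hessian along the graph of a holomorphic map\<close>

lemma linear_eq_sum_Basis:
  fixes L :: "'a::euclidean_space \<Rightarrow> real"
  assumes "linear L"
  shows "L x = (\<Sum>b\<in>Basis. (x \<bullet> b) * L b)"
  using Linear_Algebra.linear_componentwise[OF assms, of x 1] by simp

text \<open>Expanding the derivative of F in a basis turns the first derivative of
  q \<mapsto> F (q, f q) into a finite sum of products, to which the product rule applies.\<close>

lemma d2_compose_graph:
  fixes F :: "'a::euclidean_space \<times> 'b::euclidean_space \<Rightarrow> real" and f :: "'a \<Rightarrow> 'b"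
  assumes S: "open S" and F: "Ck 2 S F" and U: "open U" and z: "z \<in> U"
    and graph: "\<And>q. q \<in> U \<Longrightarrow> (q, f q) \<in> S"
    and f: "\<And>q. q \<in> U \<Longrightarrow> (f has_derivative Df q) (at q)"
    and Df: "((\<lambda>q. Df q v) has_derivative D2) (at z)"
  shows "d2 (\<lambda>q. F (q, f q)) z v w
    = d2 F (z, f z) (v, Df z v) (w, Df z w) + frechet_derivative F (at (z, f z)) (0, D2 w)"
proof -
  define DF where "DF = (\<lambda>p. frechet_derivative F (at p))"
  define h where "h = (\<lambda>q. F (q, f q))"
  have graph_deriv: "((\<lambda>q. (q, f q)) has_derivative (\<lambda>v. (v, Df q v))) (at q)" if "q \<in> U" for q
    by (rule has_derivative_Pair[OF has_derivative_ident f[OF that]])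
  have h_deriv: "(h has_derivative (\<lambda>v. DF (q, f q) (v, Df q v))) (at q)" if "q \<in> U" for q
    unfolding h_def DF_def
    using has_derivative_compose[OF graph_deriv[OF that] Ck2_has_derivative[OF F graph[OF that]]] .
  define K where "K q = (\<Sum>b\<in>Basis. ((v, Df q v) \<bullet> b) * DF (q, f q) b)" for q
  have K: "frechet_derivative h (at q) v = K q" if "q \<in> U" for q
  proof -
    have "frechet_derivative h (at q) v = DF (q, f q) (v, Df q v)"
      using frechet_derivative_at[OF h_deriv[OF that]] by metis
    also have "\<dots> = K q"
      unfolding K_def DF_def by (rule linear_eq_sum_Basis[OF Ck2_linear_derivative[OF F graph[OF that]]])
    finally show ?thesis .
  qed
  have coeff_deriv: "((\<lambda>q. (v, Df q v) \<bullet> b) has_derivative (\<lambda>w. (0, D2 w) \<bullet> b)) (at z)" for b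
    by (rule bounded_linear.has_derivative[OF bounded_linear_inner_left
          has_derivative_Pair[OF has_derivative_const Df]])
  have DF_deriv: "((\<lambda>q. DF (q, f q) b) has_derivative (\<lambda>w. d2 F (z, f z) b (w, Df z w))) (at z)" for b
    unfolding DF_def using has_derivative_compose[OF graph_deriv[OF z] Ck2_has_derivative_d2[OF F graph[OF z]]] .
  define K' where "K' w = (\<Sum>b\<in>Basis. ((v, Df z v) \<bullet> b) * d2 F (z, f z) b (w, Df z w)
      + ((0, D2 w) \<bullet> b) * DF (z, f z) b)" for w
  have "(K has_derivative K') (at z)"
    unfolding K_def K'_def by (intro has_derivative_sum has_derivative_mult coeff_deriv DF_deriv)
  then have "((\<lambda>q. frechet_derivative h (at q) v) has_derivative K') (at z)"
    by (rule has_derivative_transform_within_open[OF _ U z]) (simp add: K)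
  then have "d2 h z v w = K' w"
    unfolding d2_def using frechet_derivative_at by metis
  also have "\<dots> = (\<Sum>b\<in>Basis. ((v, Df z v) \<bullet> b) * d2 F (z, f z) b (w, Df z w))
      + (\<Sum>b\<in>Basis. ((0, D2 w) \<bullet> b) * DF (z, f z) b)"
    unfolding K'_def by (rule sum.distrib)
  also have "(\<Sum>b\<in>Basis. ((v, Df z v) \<bullet> b) * d2 F (z, f z) b (w, Df z w))
      = d2 F (z, f z) (v, Df z v) (w, Df z w)"
    using bilinear_d2[OF S F graph[OF z]] unfolding bilinear_def
    by (intro linear_eq_sum_Basis[symmetric]) blast
  also have "(\<Sum>b\<in>Basis. ((0, D2 w) \<bullet> b) * DF (z, f z) b) = DF (z, f z) (0, D2 w)"
    unfolding DF_def by (rule linear_eq_sum_Basis[OF Ck2_linear_derivative[OF F graph[OF z]], symmetric])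
  finally show ?thesis unfolding h_def DF_def .
qed

lemma bounded_linear_vector_smult: "bounded_linear (\<lambda>x::complex^'n. c *s x)"
proof -
  have "linear (\<lambda>x::complex^'n. c *s x)"
    by (rule linearI) (simp_all add: vec_eq_iff algebra_simps scaleR_conv_of_real)
  then show ?thesis using linear_conv_bounded_linear by blast
qed

lemma holo_on_second_derivative:
  fixes f :: "complex^'m \<Rightarrow> complex^'n"
  assumes U: "open U" and hol: "holo_on U f" and z: "z \<in> U"
  defines "D2 \<equiv> \<lambda>v. frechet_derivative (\<lambda>q. frechet_derivative f (at q) v) (at z)"
  shows "((\<lambda>q. frechet_derivative f (at q) v) has_derivative D2 v) (at z)"
    and "D2 v (c *s w) = c *s D2 v w"
    and "D2 (c *s v) w = c *s D2 v w"
proof -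
  have holomorphic: "((\<lambda>q. frechet_derivative f (at q) v) has_derivative D2 v) (at z)
      \<and> (\<forall>c w. D2 v (c *s w) = c *s D2 v w)" for v
  proof -
    obtain L where L: "((\<lambda>q. frechet_derivative f (at q) v) has_derivative L) (at z)"
      "\<forall>c w. L (c *s w) = c *s L w"
      using holo_on_derivative_holomorphic[OF U hol z, of v] by blast
    moreover have "D2 v = L" unfolding D2_def by (rule frechet_derivative_at[OF L(1), symmetric])
    ultimately show ?thesis by simp
  qed
  then show "((\<lambda>q. frechet_derivative f (at q) v) has_derivative D2 v) (at z)"
    and "D2 v (c *s w) = c *s D2 v w" by blast+
  have "((\<lambda>q. c *s frechet_derivative f (at q) v) has_derivative (\<lambda>w. c *s D2 v w)) (at z)"
    using bounded_linear.has_derivative[OF bounded_linear_vector_smult] holomorphic by blast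
  then have "((\<lambda>q. frechet_derivative f (at q) (c *s v)) has_derivative (\<lambda>w. c *s D2 v w)) (at z)"
    by (rule has_derivative_transform_within_open[OF _ U z]) (simp add: holo_on_has_derivative(2)[OF hol])
  then show "D2 (c *s v) w = c *s D2 v w"
    using holomorphic[of "c *s v"] frechet_derivative_at by (metis D2_def)
qed

definition wirt_form :: "('v \<Rightarrow> 'v \<Rightarrow> real) \<Rightarrow> 'v \<Rightarrow> 'v \<Rightarrow> 'v \<Rightarrow> 'v \<Rightarrow> complex" where
  "wirt_form B ea ia eb ib =
     complex_of_real ((B ea eb + B ia ib) / 4) + \<i> * complex_of_real ((B ea ib - B ia eb) / 4)"

lemma wirt_eq_wirt_form: "wirt g p = wirt_form (d2 g p)"
  by (simp add: fun_eq_iff wirt_def wirt_form_def)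

lemma wirt_form_add:
  "wirt_form (\<lambda>a b. B1 a b + B2 a b) ea ia eb ib = wirt_form B1 ea ia eb ib + wirt_form B2 ea ia eb ib"
  by (simp add: wirt_form_def add_divide_distrib diff_divide_distrib algebra_simps)

lemma wirt_form_sum:
  fixes B :: "'v::real_vector \<Rightarrow> 'v \<Rightarrow> real" and C :: "'i \<Rightarrow> complex"
    and R I :: "'i \<Rightarrow> 'v" and A :: "'i set"
  assumes B: "bilinear B"
  defines "X \<equiv> \<Sum>a\<in>A. Re (C a) *\<^sub>R R a + Im (C a) *\<^sub>R I a"
    and "Y \<equiv> \<Sum>a\<in>A. Re (C a) *\<^sub>R I a - Im (C a) *\<^sub>R R a"
  shows "wirt_form B X Y X Y = (\<Sum>a\<in>A. \<Sum>b\<in>A. C a * cnj (C b) * wirt_form B (R a) (I a) (R b) (I b))"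
    (is "_ = ?rhs")
proof -
  have sums: "B (sum U A) (sum V A) = (\<Sum>a\<in>A. \<Sum>b\<in>A. B (U a) (V b))" for U V
    by (simp add: bilinear_sum[OF B] sum.cartesian_product)
  note lin = bilinear_ladd[OF B] bilinear_radd[OF B] bilinear_lsub[OF B] bilinear_rsub[OF B]
    bilinear_lmul[OF B] bilinear_rmul[OF B]
  have "Re (wirt_form B X Y X Y) = Re ?rhs"
    unfolding wirt_form_def X_def Y_def
    by (simp add: sums lin Re_sum sum.distrib[symmetric] sum_divide_distrib algebra_simps)
      (intro sum.cong refl, simp add: field_simps)
  moreover have "Im (wirt_form B X Y X Y) = Im ?rhs"
    unfolding wirt_form_def X_def Y_def
    by (simp add: sums lin Im_sum sum.distrib[symmetric] sum_divide_distrib sum_subtractf[symmetric]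
        algebra_simps)
      (intro sum.cong refl, simp add: field_simps)
  ultimately show ?thesis by (simp add: complex_eq_iff)
qed

text \<open>For holomorphic f, the term of the chain rule involving the second derivative of f
  is the vanishing d_j dbar_j f.\<close>

lemma wirt_form_complex_bilinear_diagonal:
  fixes l :: "complex^'n \<Rightarrow> real" and D :: "complex^'m \<Rightarrow> complex^'m \<Rightarrow> complex^'n"
  assumes l: "linear l"
    and left: "\<And>w. D (\<i> *s e) w = \<i> *s D e w" and right: "\<And>v. D v (\<i> *s e) = \<i> *s D v e"
  shows "wirt_form (\<lambda>v w. l (D v w)) e (\<i> *s e) e (\<i> *s e) = 0"
proof -
  have "D (\<i> *s e) (\<i> *s e) = - D e e"
    by (simp add: left right vector_smult_assoc vector_smult_lneg[symmetric])
  moreover have "D (\<i> *s e) e = D e (\<i> *s e)" by (simp add: left right)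
  ultimately show ?thesis by (simp add: wirt_form_def linear_neg[OF l])
qed

lemma sum_ext1_dirR_dirI:
  fixes a :: "complex^'n::finite"
  shows "(\<Sum>b\<in>UNIV. Re (ext1 a b) *\<^sub>R dirR j b + Im (ext1 a b) *\<^sub>R dirI j b)
    = ((axis j 1 :: complex^'m::finite), a)"
proof (rule prod_eqI)
  show "fst (\<Sum>b\<in>UNIV. Re (ext1 a b) *\<^sub>R dirR j b + Im (ext1 a b) *\<^sub>R dirI j b)
      = fst ((axis j 1 :: complex^'m), a)"
    by (simp add: fst_sum sum_UNIV_option ext1_def dirR_def dirI_def)
  show "snd (\<Sum>b\<in>UNIV. Re (ext1 a b) *\<^sub>R dirR j b + Im (ext1 a b) *\<^sub>R dirI j b)
      = snd ((axis j 1 :: complex^'m), a)"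
    by (simp add: snd_sum sum_UNIV_option ext1_def dirR_def dirI_def vec_eq_iff sum_component
        axis_def complex_eq_iff if_distrib sum.delta cong: if_cong)
qed

lemma sum_ext1_dirI_dirR:
  fixes a :: "complex^'n::finite"
  shows "(\<Sum>b\<in>UNIV. Re (ext1 a b) *\<^sub>R dirI j b - Im (ext1 a b) *\<^sub>R dirR j b)
    = ((axis j \<i> :: complex^'m::finite), \<i> *s a)"
proof (rule prod_eqI)
  show "fst (\<Sum>b\<in>UNIV. Re (ext1 a b) *\<^sub>R dirI j b - Im (ext1 a b) *\<^sub>R dirR j b)
      = fst ((axis j \<i> :: complex^'m), \<i> *s a)"
    by (simp add: fst_sum sum_UNIV_option ext1_def dirR_def dirI_def)
  show "snd (\<Sum>b\<in>UNIV. Re (ext1 a b) *\<^sub>R dirI j b - Im (ext1 a b) *\<^sub>R dirR j b)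
      = snd ((axis j \<i> :: complex^'m), \<i> *s a)"
    by (simp add: snd_sum sum_UNIV_option ext1_def dirR_def dirI_def vec_eq_iff sum_component
        axis_def complex_eq_iff if_distrib sum.delta cong: if_cong)
qed

lemma wirt_form_d2_eq_hform_hessJ:
  assumes "bilinear (d2 F p)"
  shows "wirt_form (d2 F p) (axis j 1, a) (axis j \<i>, \<i> *s a) (axis j 1, a) (axis j \<i>, \<i> *s a)
    = hform (hessJ F p j) a"
  using wirt_form_sum[OF assms, of "ext1 a" "dirR j" "dirI j" UNIV]
  unfolding sum_ext1_dirR_dirI sum_ext1_dirI_dirR
  by (simp add: hform_def hessJ_def wirt_eq_wirt_form)

lemma cLap_graph_holomorphic:
  fixes F :: "(complex^'m::finite) \<times> (complex^'n::finite) \<Rightarrow> real"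
  assumes S: "open S" and F: "Ck 2 S F" and U: "open U" and hol: "holo_on U f" and z: "z \<in> U"
    and graph: "\<And>q. q \<in> U \<Longrightarrow> (q, f q) \<in> S"
  shows "cLap (\<lambda>q. F (q, f q)) z
    = (\<Sum>j\<in>UNIV. hform (hessJ F (z, f z) j) (frechet_derivative f (at z) (axis j 1)))"
proof -
  define p where "p = (z, f z)"
  define Df where "Df = frechet_derivative f (at z)"
  define D2 where "D2 = (\<lambda>v. frechet_derivative (\<lambda>q. frechet_derivative f (at q) v) (at z))"
  have D2: "((\<lambda>q. frechet_derivative f (at q) v) has_derivative D2 v) (at z)"
    "D2 v (c *s w) = c *s D2 v w" "D2 (c *s v) w = c *s D2 v w" for v c w
    unfolding D2_def by (rule holo_on_second_derivative[OF U hol z])+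
  have d2_graph: "d2 (\<lambda>q. F (q, f q)) z
      = (\<lambda>v w. d2 F p (v, Df v) (w, Df w) + frechet_derivative F (at p) (0, D2 v w))"
    unfolding p_def Df_def
    by (intro ext d2_compose_graph[OF S F U z graph holo_on_has_derivative(1)[OF hol] D2(1)])
  have "wirt (\<lambda>q. F (q, f q)) z (axis j 1) (axis j \<i>) (axis j 1) (axis j \<i>)
      = hform (hessJ F p j) (Df (axis j 1))" for j
  proof -
    have Df_i: "Df (axis j \<i>) = \<i> *s Df (axis j 1)"
      unfolding Df_def using holo_on_has_derivative(2)[OF hol z, of \<i> "axis j 1"]
      by (simp add: axis_eq_smult_axis_1[of j \<i>])
    have "linear (\<lambda>y. frechet_derivative F (at p) (0, y))"
      using linear_compose[OF bounded_linear.linear[OF bounded_linear_Pair[OF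
            bounded_linear_zero bounded_linear_ident]] Ck2_linear_derivative[OF F]]
        graph[OF z] by (simp add: p_def o_def)
    then have correction: "wirt_form (\<lambda>v w. frechet_derivative F (at p) (0, D2 v w))
        (axis j 1) (axis j \<i>) (axis j 1) (axis j \<i>) = 0"
      unfolding axis_eq_smult_axis_1[of j \<i>] by (rule wirt_form_complex_bilinear_diagonal) (simp_all add: D2)
    have "wirt (\<lambda>q. F (q, f q)) z (axis j 1) (axis j \<i>) (axis j 1) (axis j \<i>)
        = wirt_form (\<lambda>v w. d2 F p (v, Df v) (w, Df w)) (axis j 1) (axis j \<i>) (axis j 1) (axis j \<i>)
        + wirt_form (\<lambda>v w. frechet_derivative F (at p) (0, D2 v w))
            (axis j 1) (axis j \<i>) (axis j 1) (axis j \<i>)"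
      unfolding wirt_eq_wirt_form d2_graph by (rule wirt_form_add)
    also have "\<dots> = wirt_form (\<lambda>v w. d2 F p (v, Df v) (w, Df w)) (axis j 1) (axis j \<i>) (axis j 1) (axis j \<i>)"
      by (simp only: correction add_0_right)
    also have "\<dots> = wirt_form (d2 F p) (axis j 1, Df (axis j 1)) (axis j \<i>, \<i> *s Df (axis j 1))
        (axis j 1, Df (axis j 1)) (axis j \<i>, \<i> *s Df (axis j 1))"
      by (simp only: wirt_form_def Df_i)
    also have "\<dots> = hform (hessJ F p j) (Df (axis j 1))"
      using graph[OF z] by (intro wirt_form_d2_eq_hform_hessJ bilinear_d2[OF S F]) (simp add: p_def)
    finally show ?thesis .
  qed
  then show ?thesis by (simp add: cLap_def p_def Df_def)
qed

lemma hessJ_hermitian: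
  assumes "open S" "Ck 2 S F" "p \<in> S"
  shows "hessJ F p j $ b $ a = cnj (hessJ F p j $ a $ b)"
  using d2_commute[OF assms]
  by (simp add: hessJ_def wirt_def complex_eq_iff) (simp add: field_simps)

lemma hessX_eq_minor_hessJ: "hessX F p = (\<chi> m l. hessJ F p j $ Some m $ Some l)"
  by (simp add: hessX_def hessJ_def dirR_def dirI_def vec_eq_iff)

lemma hessJ_Schur_minimum:
  assumes S: "open S" and F: "Ck 2 S F" and p: "p \<in> S" and pos: "pos_herm (hessX F p)"
  obtains c0 where "hform (hessJ F p j) c0 = det (hessJ F p j) / det (hessX F p)"
    and "\<And>c. Re (hform (hessJ F p j) c0) \<le> Re (hform (hessJ F p j) c)"
proof -
  have det: "det (hessX F p) \<noteq> 0" by (rule pos_herm_det_nonzero[OF pos])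
  then obtain c0 where c0: "\<And>l. (\<Sum>m\<in>UNIV. c0 $ m * hessJ F p j $ Some m $ Some l) = - hessJ F p j $ None $ Some l"
    using exists_left_solution[of "hessX F p" "\<chi> l. - hessJ F p j $ None $ Some l"]
    by (auto simp: hessX_eq_minor_hessJ[of F p j])
  have "det (hessJ F p j) = hform (hessJ F p j) c0 * det (hessX F p)"
    using det_Schur_complement[OF c0] hform_critical_value[OF c0] hessX_eq_minor_hessJ[of F p j] by simp
  moreover have "Re (hform (hessJ F p j) c0) \<le> Re (hform (hessJ F p j) c)" for c
    using hform_minimum[OF hessJ_hermitian[OF S F p] _ c0] pos hessX_eq_minor_hessJ[of F p j] by simp
  ultimately show ?thesis using that det by simp
qed

lemma Re_Schur_sum_le_cLap_graph:
  fixes F :: "(complex^'m::finite) \<times> (complex^'n::finite) \<Rightarrow> real"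
  assumes S: "open S" and F: "Ck 2 S F" and pos: "\<And>p. p \<in> S \<Longrightarrow> pos_herm (hessX F p)"
    and U: "open U" and hol: "holo_on U f" and graph: "\<And>q. q \<in> U \<Longrightarrow> (q, f q) \<in> S" and z: "z \<in> U"
  shows "Re (\<Sum>j\<in>UNIV. det (hessJ F (z, f z) j) / det (hessX F (z, f z))) \<le> Re (cLap (\<lambda>q. F (q, f q)) z)"
proof -
  have "Re (det (hessJ F (z, f z) j) / det (hessX F (z, f z)))
      \<le> Re (hform (hessJ F (z, f z) j) (frechet_derivative f (at z) (axis j 1)))" for j
    by (rule hessJ_Schur_minimum[OF S F graph[OF z] pos[OF graph[OF z]], of j]) simp
  then show ?thesis
    by (simp add: cLap_graph_holomorphic[OF S F U hol z graph] Re_sum sum_mono)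
qed

lemma has_derivative_affine_vec:
  fixes c :: "'m::finite \<Rightarrow> complex^'n"
  shows "((\<lambda>z. x0 + (\<Sum>j\<in>UNIV. (z - z0) $ j *s c j)) has_derivative (\<lambda>v. \<Sum>j\<in>UNIV. v $ j *s c j)) (at q)"
proof -
  have "linear (\<lambda>v::complex^'m. \<Sum>j\<in>UNIV. v $ j *s c j)"
    by (rule linearI) (simp_all add: vec_eq_iff sum_component sum.distrib algebra_simps scaleR_sum_right)
  then have "((\<lambda>z. \<Sum>j\<in>UNIV. (z - z0) $ j *s c j) has_derivative (\<lambda>v. \<Sum>j\<in>UNIV. v $ j *s c j)) (at q)"
    using bounded_linear.has_derivative[OF linear_conv_bounded_linear[THEN iffD1]
        has_derivative_diff[OF has_derivative_ident has_derivative_const]]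
    by fastforce
  then show ?thesis using has_derivative_add[OF has_derivative_const] by fastforce
qed

lemma cLap_affine_graph_eq_Schur_sum:
  fixes F :: "(complex^'m::finite) \<times> (complex^'n::finite) \<Rightarrow> real"
  assumes S: "open S" and F: "Ck 2 S F" and p: "(z0, x0) \<in> S" and pos: "pos_herm (hessX F (z0, x0))"
  obtains U f where "open U" "z0 \<in> U" "holo_on U f" "\<And>q. q \<in> U \<Longrightarrow> (q, f q) \<in> S" "f z0 = x0"
    "cLap (\<lambda>z. F (z, f z)) z0 = (\<Sum>j\<in>UNIV. det (hessJ F (z0, x0) j) / det (hessX F (z0, x0)))"
proof -
  have "\<exists>c0. hform (hessJ F (z0, x0) j) c0 = det (hessJ F (z0, x0) j) / det (hessX F (z0, x0))" for j
  proof -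
    obtain c0 where "hform (hessJ F (z0, x0) j) c0 = det (hessJ F (z0, x0) j) / det (hessX F (z0, x0))"
      by (rule hessJ_Schur_minimum[OF S F p pos])
    then show ?thesis ..
  qed
  then obtain c where c: "\<And>j. hform (hessJ F (z0, x0) j) (c j)
      = det (hessJ F (z0, x0) j) / det (hessX F (z0, x0))"
    by metis
  define f where "f z = x0 + (\<Sum>j\<in>UNIV. (z - z0) $ j *s c j)" for z
  define U where "U = {z. (z, f z) \<in> S}"
  have f_deriv: "(f has_derivative (\<lambda>v. \<Sum>j\<in>UNIV. v $ j *s c j)) (at q)" for q
    unfolding f_def by (rule has_derivative_affine_vec)
  have "continuous_on UNIV f"
    by (rule continuous_at_imp_continuous_on) (use f_deriv has_derivative_continuous in blast)
  then have "continuous_on UNIV (\<lambda>z. (z, f z))"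
    by (intro continuous_on_Pair continuous_on_id)
  from open_vimage[OF S this] have U: "open U" by (simp add: U_def vimage_def)
  have hol: "holo_on U f"
    unfolding holo_on_def
  proof (intro ballI exI conjI allI)
    show "(f has_derivative (\<lambda>v. \<Sum>j\<in>UNIV. v $ j *s c j)) (at q)" for q by (rule f_deriv)
    show "(\<Sum>j\<in>UNIV. (a *s v) $ j *s c j) = a *s (\<Sum>j\<in>UNIV. v $ j *s c j)" for a v
      by (simp add: vec_eq_iff sum_component sum_distrib_left algebra_simps)
  qed
  have graph: "\<And>q. q \<in> U \<Longrightarrow> (q, f q) \<in> S" by (simp add: U_def)
  have f_z0: "f z0 = x0" by (simp add: f_def)
  then have z0: "z0 \<in> U" using p by (simp add: U_def)
  have "frechet_derivative f (at z0) (axis j 1) = c j" for j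
    by (simp add: frechet_derivative_at[OF f_deriv[of z0], symmetric] axis_def
        if_distrib[of "\<lambda>x. x *s _"] cong: if_cong)
  then have "cLap (\<lambda>z. F (z, f z)) z0 = (\<Sum>j\<in>UNIV. det (hessJ F (z0, x0) j) / det (hessX F (z0, x0)))"
    using cLap_graph_holomorphic[OF S F U hol z0 graph] by (simp add: c f_z0)
  with U z0 hol graph f_z0 show ?thesis by (rule that)
qed

theorem lemma3p1:
  fixes D :: "(complex^'m) set" and W :: "(complex^'n) set"
    and u :: "(complex^'m::finite) \<times> (complex^'n::finite) \<Rightarrow> real" and \<psi> :: "complex^'n \<Rightarrow> real"
  assumes D: "open D" and W: "open W"
    and u: "Ck 2 (D \<times> W) u"
    and psi: "smooth_on W \<psi>"
    and kaehler: "\<forall>x\<in>W. pos_herm (hessX (\<lambda>(z::complex^'m, y). \<psi> y) (0, x))"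
    and pos: "\<forall>z\<in>D. \<forall>x\<in>W. pos_herm (hessX (\<lambda>(z, y). u (z, y) + \<psi> y) (z, x))"
  shows "(\<forall>U f. open U \<and> U \<subseteq> D \<and> f ` U \<subseteq> W \<and> holo_on U f \<longrightarrow>
            (\<forall>z\<in>U. Re (\<Sum>j\<in>UNIV.
                 det (hessJ (\<lambda>(z, y). u (z, y) + \<psi> y) (z, f z) j)
                 / det (hessX (\<lambda>(z, y). u (z, y) + \<psi> y) (z, f z)))
               \<le> Re (cLap (\<lambda>z. \<psi> (f z) + u (z, f z)) z)))
       \<and> (\<forall>z0\<in>D. \<forall>x0\<in>W. \<exists>U f. open U \<and> z0 \<in> U \<and> U \<subseteq> D \<and> f ` U \<subseteq> W \<and> holo_on U f
            \<and> f z0 = x0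
            \<and> cLap (\<lambda>z. \<psi> (f z) + u (z, f z)) z0 =
               (\<Sum>j\<in>UNIV. det (hessJ (\<lambda>(z, y). u (z, y) + \<psi> y) (z0, x0) j)
                 / det (hessX (\<lambda>(z, y). u (z, y) + \<psi> y) (z0, x0))))"
proof -
  define F where "F = (\<lambda>(z::complex^'m, y::complex^'n). u (z, y) + \<psi> y)"
  have S: "open (D \<times> W)" by (rule open_Times[OF D W])
  have "Ck 2 (D \<times> W) (\<lambda>p. u p + \<psi> (snd p))"
    using psi unfolding smooth_on_def by (intro Ck_add[OF S u] Ck_compose_snd[OF D W]) blast
  then have F: "Ck 2 (D \<times> W) F"
    by (rule Ck_cong[OF S, rotated]) (auto simp: F_def)
  have posF: "\<And>p. p \<in> D \<times> W \<Longrightarrow> pos_herm (hessX F p)" using pos by (auto simp: F_def)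
  have graph: "(\<lambda>z. \<psi> (f z) + u (z, f z)) = (\<lambda>z. F (z, f z))" for f :: "complex^'m \<Rightarrow> complex^'n"
    by (simp add: F_def fun_eq_iff)
  have graph_in: "U \<subseteq> D \<and> f ` U \<subseteq> W \<longleftrightarrow> (\<forall>q\<in>U. (q, f q) \<in> D \<times> W)"
    for U and f :: "complex^'m \<Rightarrow> complex^'n" by auto
  show ?thesis
    unfolding graph F_def[symmetric]
  proof (intro conjI allI impI ballI)
    fix U f z assume "open U \<and> U \<subseteq> D \<and> f ` U \<subseteq> W \<and> holo_on U f" and "z \<in> U"
    then show "Re (\<Sum>j\<in>UNIV. det (hessJ F (z, f z) j) / det (hessX F (z, f z)))
        \<le> Re (cLap (\<lambda>z. F (z, f z)) z)"
      using Re_Schur_sum_le_cLap_graph[OF S F posF, of U f z] graph_in[of U f] by blast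
  next
    fix z0 x0 assume "z0 \<in> D" "x0 \<in> W"
    then have "(z0, x0) \<in> D \<times> W" by simp
    then obtain U f where "open U" "z0 \<in> U" "holo_on U f" "\<And>q. q \<in> U \<Longrightarrow> (q, f q) \<in> D \<times> W"
      "f z0 = x0" "cLap (\<lambda>z. F (z, f z)) z0 = (\<Sum>j\<in>UNIV. det (hessJ F (z0, x0) j) / det (hessX F (z0, x0)))"
      using cLap_affine_graph_eq_Schur_sum[OF S F _ posF] by blast
    then show "\<exists>U f. open U \<and> z0 \<in> U \<and> U \<subseteq> D \<and> f ` U \<subseteq> W \<and> holo_on U f \<and> f z0 = x0
        \<and> cLap (\<lambda>z. F (z, f z)) z0 = (\<Sum>j\<in>UNIV. det (hessJ F (z0, x0) j) / det (hessX F (z0, x0)))"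
      using graph_in[of U f] by blast
  qed
qed

end
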